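(* Let $m,j,k$ be positive integers. Suppose that the outcome class of $G_{m,j}$ is $H$ and that the outcome class of $G_{m,k}$ is $H$ or $2$. Then there exists $N_0$ such that for all integers $N\ge N_0$, the outcome class of $G_{m,N\gcd(j,k)}$ is $H$.
   Context: Domineering is a two-player game played on a rectangular grid of unit squares. The players alternate placing dominoes, each covering two adjacent unoccupied squares; the player Vertical must place dominoes vertically (covering two squares in the same column), and the player Horizontal must place them horizontally (covering two squares in the same row). A player with no legal move on her turn loses. $G_{m,n}$ denotes the empty board with vertical dimension $m$ (number of rows) and horizontal dimension $n$ (number of columns). Every position has one of four outcome classes under optimal play: $V$ (Vertical wins whoever moves first), $H$ (Horizontal wins whoever moves first), $1$ (the player who moves first wins), $2$ (the player who moves second wins). *)

theory Defs
  imports Main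
begin

text \<open>Cells are (row, column); row is the vertical coordinate. A position is the
set of unoccupied cells.\<close>
type_synonym cell = "nat \<times> nat"

definition board :: "nat \<Rightarrow> nat \<Rightarrow> cell set" where
  "board m n = {0..<m} \<times> {0..<n}"

text \<open>Winning with a move budget (fuel). A move removes two cells, so with fuel
at least the number of free cells the budget never runs out; hence
V_first (card B) B holds iff Vertical, moving first on B, wins.\<close>
fun V_wins_first :: "nat \<Rightarrow> cell set \<Rightarrow> bool"
and H_wins_first :: "nat \<Rightarrow> cell set \<Rightarrow> bool" where
  "V_wins_first 0 B = False"
| "V_wins_first (Suc n) B =
     (\<exists>r c. (r, c) \<in> B \<and> (Suc r, c) \<in> B \<and>
        \<not> H_wins_first n (B - {(r, c), (Suc r, c)}))"
| "H_wins_first 0 B = False"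
| "H_wins_first (Suc n) B =
     (\<exists>r c. (r, c) \<in> B \<and> (r, Suc c) \<in> B \<and>
        \<not> V_wins_first n (B - {(r, c), (r, Suc c)}))"

definition V_first :: "cell set \<Rightarrow> bool" where
  "V_first B = V_wins_first (card B) B"

definition H_first :: "cell set \<Rightarrow> bool" where
  "H_first B = H_wins_first (card B) B"

datatype outcome = OV | OH | O1 | O2

definition outcome_class :: "cell set \<Rightarrow> outcome" where
  "outcome_class B =
     (if V_first B \<and> \<not> H_first B then OV
      else if H_first B \<and> \<not> V_first B then OH
      else if V_first B \<and> H_first B then O1
      else O2)"

end

theory Submission
  imports Defs
begin

text \<open>Cut the \<open>m \<times> (a + b)\<close> board along a column line into an \<open>m \<times> a\<close> and an
\<open>m \<times> b\<close> board. Vertical dominoes never cross that line, so if Vertical loses moving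
first on both parts, she loses on the whole board: Horizontal answers each vertical move
in the part where it was played. Likewise, if Horizontal wins moving first on the first
part and Vertical loses moving first on the second, Horizontal wins moving first on the
whole. Hence the widths \<open>n\<close> with \<open>\<not> V_first (board m n)\<close> form an additive monoid
containing \<open>j\<close> and \<open>k\<close>, so it contains all large multiples of \<open>gcd j k\<close>; adding the
width \<open>j\<close>, on which Horizontal wins moving first, yields the outcome \<open>H\<close>.\<close>

lemma wins_first_Suc_fuel:
  assumes "finite B" "card B \<le> n"
  shows "V_wins_first (Suc n) B = V_wins_first n B \<and> H_wins_first (Suc n) B = H_wins_first n B"
  using assms
proof (induction n arbitrary: B)
  case 0
  then show ?case by simp
next
  case (Suc n)
  have "card (B - {p, q}) \<le> n" if "p \<in> B" for p q
  proof -
    have "card (B - {p, q}) \<le> card (B - {p})" using Suc.prems by (intro card_mono) auto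
    then show ?thesis using Suc.prems that by simp
  qed
  then have fuel: "V_wins_first (Suc n) (B - {p, q}) = V_wins_first n (B - {p, q})"
    "H_wins_first (Suc n) (B - {p, q}) = H_wins_first n (B - {p, q})" if "p \<in> B" for p q
    using Suc.IH[of "B - {p, q}"] Suc.prems(1) that by blast+
  have "V_wins_first (Suc (Suc n)) B \<longleftrightarrow>
      (\<exists>r c. (r, c) \<in> B \<and> (Suc r, c) \<in> B \<and> \<not> H_wins_first (Suc n) (B - {(r, c), (Suc r, c)}))"
    by (rule V_wins_first.simps(2))
  also have "\<dots> \<longleftrightarrow>
      (\<exists>r c. (r, c) \<in> B \<and> (Suc r, c) \<in> B \<and> \<not> H_wins_first n (B - {(r, c), (Suc r, c)}))"
    using fuel(2) by blast
  finally have V: "V_wins_first (Suc (Suc n)) B = V_wins_first (Suc n) B" by simp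
  have "H_wins_first (Suc (Suc n)) B \<longleftrightarrow>
      (\<exists>r c. (r, c) \<in> B \<and> (r, Suc c) \<in> B \<and> \<not> V_wins_first (Suc n) (B - {(r, c), (r, Suc c)}))"
    by (rule H_wins_first.simps(2))
  also have "\<dots> \<longleftrightarrow>
      (\<exists>r c. (r, c) \<in> B \<and> (r, Suc c) \<in> B \<and> \<not> V_wins_first n (B - {(r, c), (r, Suc c)}))"
    using fuel(1) by blast
  finally have "H_wins_first (Suc (Suc n)) B = H_wins_first (Suc n) B" by simp
  with V show ?case by blast
qed

lemma wins_first_fuel_stable:
  assumes "finite B" "card B \<le> n"
  shows "V_wins_first n B = V_first B \<and> H_wins_first n B = H_first B"
  using assms(2)
proof (induction n rule: dec_induct)
  case base
  then show ?case by (simp add: V_first_def H_first_def)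
next
  case (step n)
  then show ?case using wins_first_Suc_fuel assms(1) by auto
qed

lemma card_Diff_fuel_stable:
  assumes "finite B"
  shows "V_wins_first (card B) (B - X) = V_first (B - X)"
    and "H_wins_first (card B) (B - X) = H_first (B - X)"
  using wins_first_fuel_stable[of "B - X" "card B"] assms by (auto intro: card_mono)

lemma V_first_iff:
  assumes "finite B"
  shows "V_first B \<longleftrightarrow> (\<exists>r c. (r, c) \<in> B \<and> (Suc r, c) \<in> B \<and>
            \<not> H_first (B - {(r, c), (Suc r, c)}))"
proof -
  have "V_first B = V_wins_first (Suc (card B)) B"
    using wins_first_fuel_stable[of B "Suc (card B)"] assms by simp
  then show ?thesis using card_Diff_fuel_stable[OF assms] by simp
qed

lemma H_first_iff:
  assumes "finite B"
  shows "H_first B \<longleftrightarrow> (\<exists>r c. (r, c) \<in> B \<and> (r, Suc c) \<in> B \<and>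
            \<not> V_first (B - {(r, c), (r, Suc c)}))"
proof -
  have "H_first B = H_wins_first (Suc (card B)) B"
    using wins_first_fuel_stable[of B "Suc (card B)"] assms by simp
  then show ?thesis using card_Diff_fuel_stable[OF assms] by simp
qed

definition column_disjoint :: "cell set \<Rightarrow> cell set \<Rightarrow> bool" where
  "column_disjoint A B \<longleftrightarrow> (\<forall>p\<in>A. \<forall>q\<in>B. snd p \<noteq> snd q)"

lemma column_disjoint_commute: "column_disjoint A B \<longleftrightarrow> column_disjoint B A"
  unfolding column_disjoint_def by metis

lemma column_disjoint_Int: "column_disjoint A B \<Longrightarrow> A \<inter> B = {}"
  unfolding column_disjoint_def by auto

lemma column_disjoint_subset: "column_disjoint A B \<Longrightarrow> A' \<subseteq> A \<Longrightarrow> column_disjoint A' B"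
  unfolding column_disjoint_def by blast

lemma not_V_first_Un:
  assumes "finite A" "finite B" "column_disjoint A B" "\<not> V_first A" "\<not> V_first B"
  shows "\<not> V_first (A \<union> B)"
  using assms
proof (induction "card A + card B" arbitrary: A B rule: less_induct)
  case less
  have IH: "\<not> V_first (A' \<union> B')"
    if "card A' + card B' < card A + card B" "finite A'" "finite B'" "column_disjoint A' B'"
      "\<not> V_first A'" "\<not> V_first B'" for A' B'
    using less.hyps that by blast
  have answer: "H_first (X \<union> Y - {(r, c), (Suc r, c)})"
    if fin: "finite X" "finite Y" and card: "card X + card Y = card A + card B"
      and disj: "column_disjoint X Y" and lose_X: "\<not> V_first X" and lose_Y: "\<not> V_first Y"
      and v: "(r, c) \<in> X" "(Suc r, c) \<in> X" for X Y r c
  proof -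
    let ?X = "X - {(r, c), (Suc r, c)}"
    have "H_first ?X" using V_first_iff[of X] fin lose_X v by blast
    then obtain r' c' where h: "(r', c') \<in> ?X" "(r', Suc c') \<in> ?X"
      and lose: "\<not> V_first (?X - {(r', c'), (r', Suc c')})"
      using H_first_iff[of ?X] fin by blast
    let ?X' = "?X - {(r', c'), (r', Suc c')}"
    have "card ?X' < card X"
      using h fin by (intro psubset_card_mono) auto
    have "\<not> V_first (?X' \<union> Y)"
    proof (rule IH)
      show "card ?X' + card Y < card A + card B" using \<open>card ?X' < card X\<close> card by linarith
      show "column_disjoint ?X' Y" using disj by (rule column_disjoint_subset) blast
    qed (use fin lose lose_Y in auto)
    moreover have "X \<union> Y - {(r, c), (Suc r, c)} - {(r', c'), (r', Suc c')} = ?X' \<union> Y"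
      using column_disjoint_Int[OF disj] v h by blast
    moreover have "(r', c') \<in> X \<union> Y - {(r, c), (Suc r, c)}"
      "(r', Suc c') \<in> X \<union> Y - {(r, c), (Suc r, c)}" using h by auto
    ultimately show ?thesis
      using H_first_iff[of "X \<union> Y - {(r, c), (Suc r, c)}"] fin by (metis finite_Diff finite_UnI)
  qed
  show ?case
  proof
    assume "V_first (A \<union> B)"
    then obtain r c where v: "(r, c) \<in> A \<union> B" "(Suc r, c) \<in> A \<union> B"
      and not_answered: "\<not> H_first (A \<union> B - {(r, c), (Suc r, c)})"
      using V_first_iff[of "A \<union> B"] less.prems by blast
    have same_column: "(r, c) \<in> A \<longleftrightarrow> (Suc r, c) \<in> A"
      using v \<open>column_disjoint A B\<close> unfolding column_disjoint_def by force
    have "H_first (A \<union> B - {(r, c), (Suc r, c)})"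
    proof (cases "(r, c) \<in> A")
      case True
      then show ?thesis using same_column less.prems by (intro answer) auto
    next
      case False
      then have "(r, c) \<in> B" "(Suc r, c) \<in> B" using v same_column by auto
      then have "H_first (B \<union> A - {(r, c), (Suc r, c)})"
        using less.prems by (intro answer) (auto simp: column_disjoint_commute)
      then show ?thesis by (simp add: Un_commute)
    qed
    with not_answered show False by contradiction
  qed
qed

lemma H_first_Un:
  assumes "finite A" "finite B" "column_disjoint A B" "H_first A" "\<not> V_first B"
  shows "H_first (A \<union> B)"
proof -
  obtain r c where h: "(r, c) \<in> A" "(r, Suc c) \<in> A"
    and lose: "\<not> V_first (A - {(r, c), (r, Suc c)})"
    using H_first_iff[of A] assms(1,4) by blast
  have "A \<inter> B = {}" using assms(3) by (rule column_disjoint_Int)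
  then have "A \<union> B - {(r, c), (r, Suc c)} = (A - {(r, c), (r, Suc c)}) \<union> B"
    using h by blast
  moreover have "\<not> V_first ((A - {(r, c), (r, Suc c)}) \<union> B)"
    using assms(1,2) lose \<open>\<not> V_first B\<close> column_disjoint_subset[OF assms(3)]
    by (intro not_V_first_Un) auto
  ultimately show ?thesis using H_first_iff[of "A \<union> B"] assms(1,2) h by (metis UnI1 finite_UnI)
qed

definition shift_cols :: "nat \<Rightarrow> cell set \<Rightarrow> cell set" where
  "shift_cols s B = (\<lambda>(r, c). (r, c + s)) ` B"

lemma mem_shift_cols: "(r, c) \<in> shift_cols s B \<longleftrightarrow> s \<le> c \<and> (r, c - s) \<in> B"
  unfolding shift_cols_def by force

lemma inj_shift_cols: "inj (\<lambda>(r::nat, c::nat). (r, c + s))"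
  by (auto simp: inj_def)

lemma shift_cols_Diff:
  "shift_cols s B - {(a, b + s), (a', b' + s)} = shift_cols s (B - {(a, b), (a', b')})"
  unfolding shift_cols_def by (simp add: image_set_diff[OF inj_shift_cols])

lemma ex_mem_shift_cols:
  "(\<exists>r c. (r, c) \<in> shift_cols s B \<and> P r c) \<longleftrightarrow> (\<exists>r c. (r, c) \<in> B \<and> P r (c + s))"
  unfolding mem_shift_cols by (metis add_diff_cancel_right' le_add2 le_add_diff_inverse2)

lemma wins_first_shift_cols:
  "V_wins_first n (shift_cols s B) = V_wins_first n B \<and>
   H_wins_first n (shift_cols s B) = H_wins_first n B"
proof (induction n arbitrary: B)
  case 0
  then show ?case by simp
next
  case (Suc n)
  have "(Suc r, c + s) \<in> shift_cols s B \<longleftrightarrow> (Suc r, c) \<in> B"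
    "(r, Suc (c + s)) \<in> shift_cols s B \<longleftrightarrow> (r, Suc c) \<in> B" for r c
    by (simp_all add: mem_shift_cols)
  moreover have
    "shift_cols s B - {(r, c + s), (Suc r, c + s)} = shift_cols s (B - {(r, c), (Suc r, c)})"
    "shift_cols s B - {(r, c + s), (r, Suc (c + s))} = shift_cols s (B - {(r, c), (r, Suc c)})"
    for r c
    using shift_cols_Diff[of s B r c "Suc r" c] shift_cols_Diff[of s B r c r "Suc c"] by simp_all
  ultimately show ?case
    by (simp only: V_wins_first.simps H_wins_first.simps ex_mem_shift_cols Suc.IH)
qed

lemma first_shift_cols:
  "V_first (shift_cols s B) = V_first B" "H_first (shift_cols s B) = H_first B"
proof -
  have "card (shift_cols s B) = card B"
    unfolding shift_cols_def by (simp add: card_image inj_on_subset[OF inj_shift_cols])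
  then show "V_first (shift_cols s B) = V_first B" "H_first (shift_cols s B) = H_first B"
    unfolding V_first_def H_first_def using wins_first_shift_cols by auto
qed

lemma board_add: "board m (a + b) = board m a \<union> shift_cols a (board m b)"
  by (auto simp: board_def mem_shift_cols)

lemma column_disjoint_board_add: "column_disjoint (board m a) (shift_cols a (board m b))"
  unfolding column_disjoint_def by (auto simp: board_def mem_shift_cols)

lemma finite_board: "finite (board m n)"
  by (simp add: board_def)

lemma not_V_first_board_add:
  "\<not> V_first (board m a) \<Longrightarrow> \<not> V_first (board m b) \<Longrightarrow> \<not> V_first (board m (a + b))"
  unfolding board_add
  using not_V_first_Un[OF finite_board _ column_disjoint_board_add] first_shift_cols
  by (simp add: shift_cols_def finite_board)

lemma H_first_board_add:
  "H_first (board m a) \<Longrightarrow> \<not> V_first (board m b) \<Longrightarrow> H_first (board m (a + b))"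
  unfolding board_add
  using H_first_Un[OF finite_board _ column_disjoint_board_add] first_shift_cols
  by (simp add: shift_cols_def finite_board)

lemma not_V_first_board_0: "\<not> V_first (board m 0)"
  by (simp add: board_def V_first_def)

lemma add_closed_contains_large_gcd_multiples:
  fixes S :: "nat set" and j k :: nat
  assumes "0 \<in> S" and add: "\<And>a b. a \<in> S \<Longrightarrow> b \<in> S \<Longrightarrow> a + b \<in> S"
    and "j \<in> S" "k \<in> S" "j > 0" "k > 0"
  shows "\<exists>N0. \<forall>N \<ge> N0. N * gcd j k \<in> S"
proof -
  have mult: "c * a \<in> S" if "a \<in> S" for a c
    using that by (induction c) (simp_all add: \<open>0 \<in> S\<close> add)
  define g where "g = gcd j k"
  obtain x y where bezout: "j * x = k * y + g"
    using bezout_nat[of j k] \<open>j > 0\<close> unfolding g_def by auto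
  define k' where "k' = k div g"
  have k_eq: "k = k' * g" unfolding k'_def g_def by simp
  have "k' > 0" using k_eq \<open>k > 0\<close> by (metis gr0I mult_eq_0_iff)
  show ?thesis
  proof (intro exI allI impI)
    fix N assume "N \<ge> y * k' * k'"
    define t r where "t = N div k'" and "r = N mod k'"
    have N_eq: "N = t * k' + r" unfolding t_def r_def by simp
    have "r < k'" unfolding r_def using \<open>k' > 0\<close> by simp
    have "y * k' \<le> t"
      using div_le_mono[OF \<open>N \<ge> y * k' * k'\<close>, of k'] \<open>k' > 0\<close> unfolding t_def by simp
    then have "r * y \<le> t"
      using \<open>r < k'\<close> by (metis le_trans less_imp_le mult.commute mult_le_mono1)
    have "N * g + r * y * k = r * x * j + t * k"
    proof -
      have "N * g = t * k + r * g" using N_eq k_eq by (simp add: algebra_simps)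
      moreover have "r * (j * x) = r * (k * y + g)" using bezout by simp
      ultimately show ?thesis by (simp add: algebra_simps)
    qed
    then have "N * g = r * x * j + (t - r * y) * k"
      using \<open>r * y \<le> t\<close> by (simp add: diff_mult_distrib)
    then show "N * gcd j k \<in> S"
      using add mult \<open>j \<in> S\<close> \<open>k \<in> S\<close> unfolding g_def by simp
  qed
qed

lemma outcome_class_eq_OH_iff: "outcome_class B = OH \<longleftrightarrow> H_first B \<and> \<not> V_first B"
  by (cases "V_first B"; cases "H_first B") (simp_all add: outcome_class_def)

lemma outcome_class_OH_or_O2_iff: "outcome_class B \<in> {OH, O2} \<longleftrightarrow> \<not> V_first B"
  by (cases "V_first B"; cases "H_first B") (simp_all add: outcome_class_def)

theorem proposition3p2:
  fixes m j k :: nat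
  assumes "m > 0" and "j > 0" and "k > 0"
    and "outcome_class (board m j) = OH"
    and "outcome_class (board m k) \<in> {OH, O2}"
  shows "\<exists>N0. \<forall>N \<ge> N0. outcome_class (board m (N * gcd j k)) = OH"
proof -
  let ?S = "{n. \<not> V_first (board m n)}"
  have H_first_j: "H_first (board m j)" and j: "j \<in> ?S"
    using assms(4) unfolding outcome_class_eq_OH_iff by simp_all
  have k: "k \<in> ?S"
    using assms(5) unfolding outcome_class_OH_or_O2_iff by simp
  have "0 \<in> ?S" using not_V_first_board_0 by simp
  moreover have "a + b \<in> ?S" if "a \<in> ?S" "b \<in> ?S" for a b
    using that not_V_first_board_add by simp
  ultimately obtain N0 where N0: "\<forall>N \<ge> N0. N * gcd j k \<in> ?S"
    using add_closed_contains_large_gcd_multiples[of ?S, OF _ _ j k assms(2,3)] by blast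
  define j' where "j' = j div gcd j k"
  show ?thesis
  proof (intro exI allI impI)
    fix N assume N: "N \<ge> N0 + j'"
    then have "N * gcd j k = j' * gcd j k + (N - j') * gcd j k"
      by (simp flip: add_mult_distrib)
    also have "j' * gcd j k = j"
      unfolding j'_def by simp
    finally have "N * gcd j k = j + (N - j') * gcd j k" .
    moreover have "N * gcd j k \<in> ?S" "(N - j') * gcd j k \<in> ?S"
      using N N0 by simp_all
    ultimately show "outcome_class (board m (N * gcd j k)) = OH"
      unfolding outcome_class_eq_OH_iff using H_first_board_add[OF H_first_j] by simp
  qed
qed

end
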